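(* Let $n\geq 1$ and let $Q\in\mathbb{Q}^{n\times n}$ be a rational orthogonal matrix with level $\ell$, and let $d_1,\ldots,d_n$ be the diagonal entries of the Smith normal form of the integer matrix $\ell Q$. Suppose that $X$ is a random symmetric integer $n\times n$ matrix whose upper-triangular entries $\{X_{i,j}:i\leq j\}$ have independent and uniformly distributed reductions to $\mathbb{Z}/\ell^2\mathbb{Z}$. Then $$\mathbb{P}(Q^{T}XQ\in\mathbb{Z}^{n\times n})=\prod_{i=1}^{\lfloor n/2\rfloor}\prod_{j=i}^{n-i}\frac{d_id_j}{\ell^2}.$$
   Context: The level of a rational matrix $Q$ is the least integer $\ell\geq 1$ with $\ell Q\in\mathbb{Z}^{n\times n}$. The Smith normal form entries $d_1,\ldots,d_n$ are taken to be nonnegative integers with $d_1\mid d_2\mid\cdots\mid d_n$, so that the Smith ideals of $\ell Q$ over $\mathbb{Z}$ are $d_i\mathbb{Z}$. *)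

theory Defs
  imports "Jordan_Normal_Form.Matrix" "HOL-Probability.Probability"
begin

definition integral_mat :: "nat \<Rightarrow> rat mat \<Rightarrow> bool" where
  "integral_mat n Q \<longleftrightarrow> (\<forall>i<n. \<forall>j<n. Q $$ (i,j) \<in> \<int>)"

definition level :: "nat \<Rightarrow> rat mat \<Rightarrow> nat" where
  "level n Q = (LEAST l. l \<ge> 1 \<and> integral_mat n (of_nat l \<cdot>\<^sub>m Q))"

definition orthogonal_rat_mat :: "nat \<Rightarrow> rat mat \<Rightarrow> bool" where
  "orthogonal_rat_mat n Q \<longleftrightarrow> Q \<in> carrier_mat n n \<and> transpose_mat Q * Q = 1\<^sub>m n"

definition unimodular :: "nat \<Rightarrow> int mat \<Rightarrow> bool" where
  "unimodular n P \<longleftrightarrow> P \<in> carrier_mat n n \<and>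
     (\<exists>P' \<in> carrier_mat n n. P * P' = 1\<^sub>m n \<and> P' * P = 1\<^sub>m n)"

definition smith_diag :: "nat \<Rightarrow> int mat \<Rightarrow> (nat \<Rightarrow> int) \<Rightarrow> bool" where
  "smith_diag n M d \<longleftrightarrow>
     (\<forall>i\<in>{1..n}. d i \<ge> 0) \<and> (\<forall>i. 1 \<le> i \<and> i < n \<longrightarrow> d i dvd d (Suc i)) \<and>
     (\<exists>P R. unimodular n P \<and> unimodular n R \<and>
        P * M * R = Matrix.mat n n (\<lambda>(i,j). if i = j then d (Suc i) else 0))"

end

theory Submission
  imports Defs "HOL-Number_Theory.Cong"
begin

text \<open>Put L = l^2 and A = l Q, so that A^T A = L. The matrix Q^T X Q is integral iff L divides
  every entry of A^T X A, which depends only on X modulo L; hence the probability is N / L^(n(n+1)/2),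
  where N counts the symmetric Y modulo L with A^T Y A = 0 (mod L). Writing A = P D R with P, R
  unimodular and D = diag(d_1, ..., d_n), the count does not change when A is replaced by D, and for
  diagonal D it factors as the product of gcd(d_i d_j, L) over i <= j. Since R A^T P is diagonal with
  entries L/d_i and equivalent to D, uniqueness of Smith forms (detected by the products of
  gcd(d_i, m), which count the solutions of D Y = 0 mod m) gives d_i d_(n+1-i) = L. Therefore
  gcd(d_i d_j, L) is d_i d_j for i + j <= n and L otherwise.\<close>

section \<open>Linear congruences and divisor chains\<close>

lemma card_residues_dvd_mult:
  fixes m c :: int
  assumes m: "m > 0"
  shows "card {x \<in> {0..<m}. m dvd c * x} = nat (gcd c m)"
proof -
  define g where "g = gcd c m"
  define m' where "m' = m div g"
  have g: "g > 0" using m by (simp add: g_def)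
  have mm: "m = g * m'" unfolding m'_def g_def by simp
  have m': "m' > 0" using m g mm by (simp add: zero_less_mult_iff)
  have dvd_iff: "m dvd c * x \<longleftrightarrow> m' dvd x" for x
  proof -
    have cop: "coprime (c div g) m'"
      unfolding m'_def g_def by (rule div_gcd_coprime) (use m in auto)
    have "c = g * (c div g)" unfolding g_def by simp
    then have "m dvd c * x \<longleftrightarrow> g * m' dvd g * (c div g * x)"
      using mm by (metis mult.assoc)
    also have "\<dots> \<longleftrightarrow> m' dvd x"
      using g cop by (simp add: coprime_commute coprime_dvd_mult_right_iff)
    finally show ?thesis .
  qed
  have "{x \<in> {0..<m}. m dvd c * x} = (\<lambda>k. m' * k) ` {0..<g}"
  proof (intro Set.set_eqI iffI)
    fix x assume "x \<in> {x \<in> {0..<m}. m dvd c * x}"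
    then have x: "0 \<le> x" "x < m" "m' dvd x" using dvd_iff by auto
    then obtain k where k: "x = m' * k" by (elim dvdE)
    have "m' * k < m' * g" using x(2) k mm by (simp add: mult.commute)
    then have "k \<in> {0..<g}" using x(1) k m' by (simp add: zero_le_mult_iff)
    then show "x \<in> (\<lambda>k. m' * k) ` {0..<g}" using k by blast
  next
    fix x assume "x \<in> (\<lambda>k. m' * k) ` {0..<g}"
    then obtain k where k: "k \<in> {0..<g}" "x = m' * k" by blast
    moreover have "m' * k < m' * g" using m' k(1) by simp
    ultimately show "x \<in> {x \<in> {0..<m}. m dvd c * x}" using dvd_iff m' mm by simp
  qed
  moreover have "inj_on (\<lambda>k. m' * k) {0..<g}" using m' by (auto simp: inj_on_def)
  ultimately show ?thesis by (simp add: card_image g_def)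
qed

definition divisor_chain :: "nat \<Rightarrow> (nat \<Rightarrow> int) \<Rightarrow> bool" where
  "divisor_chain n d \<longleftrightarrow> (\<forall>i. 1 \<le> i \<and> i < n \<longrightarrow> d i dvd d (Suc i))"

lemma divisor_chain_dvd:
  assumes chain: "divisor_chain n d" and "1 \<le> a" "a \<le> b" "b \<le> n"
  shows "d a dvd d b"
  using assms(3,4)
proof (induction b)
  case (Suc b)
  show ?case
  proof (cases "a = Suc b")
    case False
    then have "d a dvd d b" using Suc by simp
    moreover have "d b dvd d (Suc b)"
      using chain Suc.prems False \<open>1 \<le> a\<close> unfolding divisor_chain_def by simp
    ultimately show ?thesis by (rule dvd_trans)
  qed simp
qed (use \<open>1 \<le> a\<close> in simp)

lemma prod_bounded_eq_power_imp_eq: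
  fixes f :: "'a \<Rightarrow> int"
  assumes S: "finite S" "k \<in> S" and bound: "\<forall>i\<in>S. 0 < f i \<and> f i \<le> c"
    and prod: "(\<Prod>i\<in>S. f i) = c ^ card S"
  shows "f k = c"
proof (rule ccontr)
  assume "f k \<noteq> c"
  then have less: "f k < c" using bound S by force
  have pos: "0 < (\<Prod>i\<in>S-{k}. f i)" using bound by (intro prod_pos) auto
  have "(\<Prod>i\<in>S-{k}. f i) \<le> (\<Prod>i\<in>S-{k}. c)"
    using bound by (intro prod_mono) auto
  then have le: "(\<Prod>i\<in>S-{k}. f i) \<le> c ^ (card S - 1)"
    using S by simp
  have "(\<Prod>i\<in>S. f i) = f k * (\<Prod>i\<in>S-{k}. f i)" using S by (simp add: prod.remove)
  also have "\<dots> < c * (\<Prod>i\<in>S-{k}. f i)" using less pos by simp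
  also have "\<dots> \<le> c * c ^ (card S - 1)" using le less bound S by (intro mult_left_mono) auto
  also have "\<dots> = c ^ card S"
    using S by (metis card_gt_0_iff empty_iff power_eq_if neq0_conv)
  finally show False using prod by simp
qed

text \<open>The gcd-products \<open>\<Prod>i. gcd (a i) m\<close> for all moduli m determine a positive
  divisor chain: for m = a k, the factors with index at least k all equal a k.\<close>

lemma divisor_chain_dvd_if_prod_gcd_eq:
  fixes a b :: "nat \<Rightarrow> int"
  assumes pos: "\<forall>i\<in>{1..n}. a i > 0" and chain: "divisor_chain n a"
    and prod: "(\<Prod>i\<in>{1..n}. gcd (a i) (a k)) = (\<Prod>i\<in>{1..n}. gcd (b i) (a k))"
    and below: "\<forall>i\<in>{1..<k}. a i = b i" and k: "k \<in> {1..n}"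
  shows "a k dvd b k"
proof -
  have split: "(\<Prod>i\<in>{1..n}. h i) = (\<Prod>i\<in>{1..<k}. h i) * (\<Prod>i\<in>{k..n}. h i)"
    for h :: "nat \<Rightarrow> int"
    using k by (subst prod.union_disjoint[symmetric]) (auto intro: prod.cong)
  have ak: "a k > 0" using pos k by auto
  have "(\<Prod>i\<in>{k..n}. gcd (a i) (a k)) = (\<Prod>i\<in>{k..n}. a k)"
  proof (rule prod.cong)
    fix i assume "i \<in> {k..n}"
    then have "a k dvd a i" using divisor_chain_dvd[OF chain] k by auto
    then show "gcd (a i) (a k) = a k" using ak by (simp add: gcd.commute gcd_proj1_iff)
  qed simp
  moreover have "(\<Prod>i\<in>{1..<k}. gcd (b i) (a k)) = (\<Prod>i\<in>{1..<k}. gcd (a i) (a k))"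
    using below by (intro prod.cong) auto
  moreover have "(\<Prod>i\<in>{1..<k}. gcd (a i) (a k)) \<noteq> 0" using ak by simp
  ultimately have "(\<Prod>i\<in>{k..n}. gcd (b i) (a k)) = a k ^ card {k..n}"
    using prod ak unfolding split by simp
  then have "gcd (b k) (a k) = a k"
    by (rule prod_bounded_eq_power_imp_eq[rotated 3]) (use k ak in \<open>auto intro: zdvd_imp_le\<close>)
  then show ?thesis by (metis gcd_dvd1)
qed

lemma divisor_chain_eq_if_prod_gcd_eq:
  fixes a b :: "nat \<Rightarrow> int"
  assumes "\<forall>i\<in>{1..n}. a i > 0" "\<forall>i\<in>{1..n}. b i > 0"
    and "divisor_chain n a" "divisor_chain n b"
    and "\<forall>m>0. (\<Prod>i\<in>{1..n}. gcd (a i) m) = (\<Prod>i\<in>{1..n}. gcd (b i) m)"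
    and "k \<in> {1..n}"
  shows "a k = b k"
  using assms(6)
proof (induction k rule: less_induct)
  case (less k)
  then have below: "\<forall>i\<in>{1..<k}. a i = b i" by auto
  have "a k dvd b k"
    by (rule divisor_chain_dvd_if_prod_gcd_eq) (use assms less below in auto)
  moreover have "b k dvd a k"
    by (rule divisor_chain_dvd_if_prod_gcd_eq) (use assms less below in auto)
  ultimately show ?case using assms(1,2) less.prems by (meson less_le zdvd_antisym_nonneg)
qed

section \<open>Integer matrices modulo m\<close>

definition mat_cong :: "int \<Rightarrow> nat \<Rightarrow> int mat \<Rightarrow> int mat \<Rightarrow> bool" where
  "mat_cong m n B C \<longleftrightarrow> (\<forall>i<n. \<forall>j<n. [B $$ (i,j) = C $$ (i,j)] (mod m))"

definition entries_dvd :: "int \<Rightarrow> nat \<Rightarrow> int mat \<Rightarrow> bool" where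
  "entries_dvd m n B \<longleftrightarrow> (\<forall>i<n. \<forall>j<n. m dvd B $$ (i,j))"

lemma mat_cong_refl [simp]: "mat_cong m n B B"
  by (simp add: mat_cong_def)

lemma mat_cong_trans [trans]: "mat_cong m n B C \<Longrightarrow> mat_cong m n C E \<Longrightarrow> mat_cong m n B E"
  unfolding mat_cong_def by (meson cong_trans)

lemma mat_cong_mult:
  assumes "B \<in> carrier_mat n n" "B' \<in> carrier_mat n n" "C \<in> carrier_mat n n" "C' \<in> carrier_mat n n"
    and "mat_cong m n B B'" "mat_cong m n C C'"
  shows "mat_cong m n (B * C) (B' * C')"
  unfolding mat_cong_def
proof (intro allI impI)
  fix i j assume ij: "i < n" "j < n"
  have entry: "(X * Y) $$ (i,j) = (\<Sum>k<n. X $$ (i,k) * Y $$ (k,j))"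
    if "X \<in> carrier_mat n n" "Y \<in> carrier_mat n n" for X Y :: "int mat"
    using that ij by (simp add: scalar_prod_def atLeast0LessThan)
  show "[(B * C) $$ (i,j) = (B' * C') $$ (i,j)] (mod m)"
    unfolding entry[OF assms(1,3)] entry[OF assms(2,4)]
    using assms(5,6) ij unfolding mat_cong_def by (intro cong_sum cong_mult) auto
qed

lemma mat_cong_mult3:
  assumes "S \<in> carrier_mat n n" "T \<in> carrier_mat n n" "Y \<in> carrier_mat n n" "Y' \<in> carrier_mat n n"
    and "mat_cong m n Y Y'"
  shows "mat_cong m n (S * Y * T) (S * Y' * T)"
  using assms by (intro mat_cong_mult mat_cong_refl) auto

lemma entries_dvd_iff_mat_cong_0: "entries_dvd m n B \<longleftrightarrow> mat_cong m n B (0\<^sub>m n n)"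
  by (simp add: entries_dvd_def mat_cong_def cong_0_iff)

lemma mat_cong_entries_dvd: "mat_cong m n B C \<Longrightarrow> entries_dvd m n B \<longleftrightarrow> entries_dvd m n C"
  unfolding mat_cong_def entries_dvd_def by (meson cong_dvd_iff)

lemma sandwich_inverse_cancel:
  fixes S S' T T' Y :: "int mat"
  assumes "S \<in> carrier_mat n n" "S' \<in> carrier_mat n n" "S' * S = 1\<^sub>m n"
    and "T \<in> carrier_mat n n" "T' \<in> carrier_mat n n" "T * T' = 1\<^sub>m n"
    and "Y \<in> carrier_mat n n"
  shows "S' * (S * Y * T) * T' = Y"
proof -
  have "S' * (S * Y * T) * T' = (S' * S) * Y * (T * T')"
    using assms(1,2,4,5,7) by (simp add: assoc_mult_mat[of _ n n _ n _ n])
  also have "\<dots> = Y" using assms(3,6,7) by simp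
  finally show ?thesis .
qed

lemma unimodular_one: "unimodular n (1\<^sub>m n)"
  unfolding unimodular_def by auto

lemma unimodular_mult:
  assumes "unimodular n P" "unimodular n R"
  shows "unimodular n (P * R)"
proof -
  obtain P' R' where P: "P \<in> carrier_mat n n" "P' \<in> carrier_mat n n" "P * P' = 1\<^sub>m n" "P' * P = 1\<^sub>m n"
    and R: "R \<in> carrier_mat n n" "R' \<in> carrier_mat n n" "R * R' = 1\<^sub>m n" "R' * R = 1\<^sub>m n"
    using assms unfolding unimodular_def by blast
  have "P * R * (R' * P') = P * (R * R') * P'" "R' * P' * (P * R) = R' * (P' * P) * R"
    using P(1,2) R(1,2) by (simp_all add: assoc_mult_mat[of _ n n _ n _ n])
  then have "P * R * (R' * P') = 1\<^sub>m n" "R' * P' * (P * R) = 1\<^sub>m n"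
    using P R by simp_all
  then show ?thesis
    using P R unfolding unimodular_def by (intro conjI bexI[of _ "R' * P'"]) auto
qed

lemma unimodular_transpose:
  assumes "unimodular n P"
  shows "unimodular n (transpose_mat P)"
proof -
  obtain P' where P: "P \<in> carrier_mat n n" "P' \<in> carrier_mat n n" "P * P' = 1\<^sub>m n" "P' * P = 1\<^sub>m n"
    using assms unfolding unimodular_def by blast
  have "transpose_mat P * transpose_mat P' = transpose_mat (P' * P)"
    using P(1,2) by (simp add: transpose_mult[of _ n n _ n])
  moreover have "transpose_mat P' * transpose_mat P = transpose_mat (P * P')"
    using P(1,2) by (simp add: transpose_mult[of _ n n _ n])
  ultimately have "transpose_mat P * transpose_mat P' = 1\<^sub>m n" "transpose_mat P' * transpose_mat P = 1\<^sub>m n"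
    using P(3,4) by simp_all
  then show ?thesis
    using P unfolding unimodular_def by (intro conjI bexI[of _ "transpose_mat P'"]) auto
qed

lemma entries_dvd_unimodular_iff:
  assumes "unimodular n U" "unimodular n V" "B \<in> carrier_mat n n"
  shows "entries_dvd m n (U * B * V) \<longleftrightarrow> entries_dvd m n B"
proof -
  have preserve: "entries_dvd m n (S * Y * T)"
    if "S \<in> carrier_mat n n" "T \<in> carrier_mat n n" "Y \<in> carrier_mat n n" "entries_dvd m n Y"
    for S T Y
  proof -
    have "mat_cong m n (S * Y * T) (S * 0\<^sub>m n n * T)"
      using that by (intro mat_cong_mult3) (auto simp: entries_dvd_iff_mat_cong_0)
    then show ?thesis using that by (simp add: entries_dvd_iff_mat_cong_0)
  qed
  obtain U' V' where U: "U \<in> carrier_mat n n" "U' \<in> carrier_mat n n" "U' * U = 1\<^sub>m n"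
    and V: "V \<in> carrier_mat n n" "V' \<in> carrier_mat n n" "V * V' = 1\<^sub>m n"
    using assms(1,2) unfolding unimodular_def by blast
  have "U' * (U * B * V) * V' = B" using U V assms(3) by (rule sandwich_inverse_cancel)
  then show ?thesis using preserve U V assms(3) by (metis mult_carrier_mat)
qed

section \<open>Counting residue codes\<close>

definition residues :: "int \<Rightarrow> (nat \<times> nat) set \<Rightarrow> int mat \<Rightarrow> nat \<times> nat \<Rightarrow> int" where
  "residues m I Y = (\<lambda>p\<in>I. Y $$ p mod m)"

lemma residues_in_PiE: "m > 0 \<Longrightarrow> residues m I Y \<in> PiE I (\<lambda>_. {0..<m})"
  by (auto simp: residues_def)

text \<open>The map enc rebuilds a matrix of the class C from its entries at the positions I;
  these entries, reduced modulo m, determine the matrix modulo m.\<close>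

locale residue_code =
  fixes n :: nat and I :: "(nat \<times> nat) set"
    and C :: "int mat set" and enc :: "(nat \<times> nat \<Rightarrow> int) \<Rightarrow> int mat"
  assumes code_carrier: "C \<subseteq> carrier_mat n n"
    and enc_in: "\<And>f. enc f \<in> C"
    and enc_residues: "\<And>m Y. Y \<in> C \<Longrightarrow> mat_cong m n (enc (residues m I Y)) Y"
    and enc_inj: "\<And>m f g. f \<in> PiE I (\<lambda>_. {0..<m}) \<Longrightarrow> g \<in> PiE I (\<lambda>_. {0..<m}) \<Longrightarrow>
      mat_cong m n (enc f) (enc g) \<Longrightarrow> f = g"
begin

lemma enc_carrier: "enc f \<in> carrier_mat n n"
  using enc_in code_carrier by auto

lemma sandwich_residues_cancel:
  assumes "S \<in> carrier_mat n n" "S' \<in> carrier_mat n n" "S' * S = 1\<^sub>m n"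
    and "T \<in> carrier_mat n n" "T' \<in> carrier_mat n n" "T * T' = 1\<^sub>m n"
    and closed: "\<And>Y. Y \<in> C \<Longrightarrow> S * Y * T \<in> C"
  shows "mat_cong m n (S' * enc (residues m I (S * enc f * T)) * T') (enc f)"
proof -
  have "mat_cong m n (S' * enc (residues m I (S * enc f * T)) * T') (S' * (S * enc f * T) * T')"
    using assms enc_carrier by (intro mat_cong_mult3 enc_residues closed enc_in) auto
  also have "S' * (S * enc f * T) * T' = enc f"
    by (rule sandwich_inverse_cancel[OF assms(1-6) enc_carrier])
  finally show ?thesis .
qed

lemma card_sandwich_invariant:
  assumes m: "m > 0"
    and S: "S \<in> carrier_mat n n" "S' \<in> carrier_mat n n" "S * S' = 1\<^sub>m n" "S' * S = 1\<^sub>m n"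
    and T: "T \<in> carrier_mat n n" "T' \<in> carrier_mat n n" "T * T' = 1\<^sub>m n" "T' * T = 1\<^sub>m n"
    and closed: "\<And>Y. Y \<in> C \<Longrightarrow> S * Y * T \<in> C" "\<And>Y. Y \<in> C \<Longrightarrow> S' * Y * T' \<in> C"
    and P: "\<And>Y Y'. Y \<in> carrier_mat n n \<Longrightarrow> Y' \<in> carrier_mat n n \<Longrightarrow> mat_cong m n Y Y' \<Longrightarrow> P Y = P Y'"
  shows "card {f \<in> PiE I (\<lambda>_. {0..<m}). P (S * enc f * T)} = card {f \<in> PiE I (\<lambda>_. {0..<m}). P (enc f)}"
proof -
  define \<phi> where "\<phi> f = residues m I (S * enc f * T)" for f
  define \<psi> where "\<psi> f = residues m I (S' * enc f * T')" for f
  have \<phi>: "mat_cong m n (enc (\<phi> f)) (S * enc f * T)" for f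
    unfolding \<phi>_def by (intro enc_residues closed enc_in)
  have \<psi>: "mat_cong m n (enc (\<psi> f)) (S' * enc f * T')" for f
    unfolding \<psi>_def by (intro enc_residues closed enc_in)
  have \<phi>_back: "mat_cong m n (S' * enc (\<phi> f) * T') (enc f)" for f
    unfolding \<phi>_def using S(1,2,4) T(1,2,3) closed(1) by (rule sandwich_residues_cancel)
  have \<psi>_back: "mat_cong m n (S * enc (\<psi> f) * T) (enc f)" for f
    unfolding \<psi>_def using S(2,1,3) T(2,1,4) closed(2) by (rule sandwich_residues_cancel)
  have in_PiE: "\<phi> f \<in> PiE I (\<lambda>_. {0..<m})" "\<psi> f \<in> PiE I (\<lambda>_. {0..<m})" for f
    unfolding \<phi>_def \<psi>_def using m by (simp_all add: residues_in_PiE)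
  have carrier: "S * enc f * T \<in> carrier_mat n n" for f
    using S T enc_carrier[of f] by simp
  have "bij_betw \<phi> {f \<in> PiE I (\<lambda>_. {0..<m}). P (S * enc f * T)} {f \<in> PiE I (\<lambda>_. {0..<m}). P (enc f)}"
  proof (rule bij_betw_byWitness[where f' = \<psi>])
    show "\<forall>f \<in> {f \<in> PiE I (\<lambda>_. {0..<m}). P (S * enc f * T)}. \<psi> (\<phi> f) = f"
      using enc_inj[OF in_PiE(2) _ mat_cong_trans[OF \<psi> \<phi>_back]] by simp
    show "\<forall>f \<in> {f \<in> PiE I (\<lambda>_. {0..<m}). P (enc f)}. \<phi> (\<psi> f) = f"
      using enc_inj[OF in_PiE(1) _ mat_cong_trans[OF \<phi> \<psi>_back]] by simp
    show "\<phi> ` {f \<in> PiE I (\<lambda>_. {0..<m}). P (S * enc f * T)} \<subseteq> {f \<in> PiE I (\<lambda>_. {0..<m}). P (enc f)}"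
      using in_PiE(1) P[OF enc_carrier carrier \<phi>] by auto
    show "\<psi> ` {f \<in> PiE I (\<lambda>_. {0..<m}). P (enc f)} \<subseteq> {f \<in> PiE I (\<lambda>_. {0..<m}). P (S * enc f * T)}"
      using in_PiE(2) P[OF carrier enc_carrier \<psi>_back] by auto
  qed
  then show ?thesis by (rule bij_betw_same_card)
qed

end

definition upper_pairs :: "nat \<Rightarrow> (nat \<times> nat) set" where
  "upper_pairs n = {(i,j). i \<le> j \<and> j < n}"

definition sym_mat :: "nat \<Rightarrow> (nat \<times> nat \<Rightarrow> int) \<Rightarrow> int mat" where
  "sym_mat n f = Matrix.mat n n (\<lambda>(i,j). f (min i j, max i j))"

lemma finite_upper_pairs [simp]: "finite (upper_pairs n)"
  by (rule finite_subset[of _ "{0..<n} \<times> {0..<n}"]) (auto simp: upper_pairs_def)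

lemma PiE_residues_eq_if_cong:
  fixes f g :: "'a \<Rightarrow> int"
  assumes "f \<in> PiE I (\<lambda>_. {0..<m})" "g \<in> PiE I (\<lambda>_. {0..<m})"
    and "\<And>p. p \<in> I \<Longrightarrow> [f p = g p] (mod m)"
  shows "f = g"
proof (rule PiE_ext[OF assms(1,2)])
  fix p assume p: "p \<in> I"
  then have "f p \<in> {0..<m}" "g p \<in> {0..<m}" using assms(1,2) by (auto dest: PiE_mem)
  then show "f p = g p" using assms(3)[OF p] by (simp add: cong_def)
qed

lemma residue_code_full: "residue_code n ({0..<n} \<times> {0..<n}) (carrier_mat n n) (Matrix.mat n n)"
proof
  fix m f g
  assume "f \<in> PiE ({0..<n} \<times> {0..<n}) (\<lambda>_. {0..<m})" "g \<in> PiE ({0..<n} \<times> {0..<n}) (\<lambda>_. {0..<m})"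
    and "mat_cong m n (Matrix.mat n n f) (Matrix.mat n n g)"
  then show "f = g"
    by (intro PiE_residues_eq_if_cong) (auto simp: mat_cong_def)
qed (auto simp: mat_cong_def residues_def cong_def)

lemma residue_code_sym:
  "residue_code n (upper_pairs n) {Y \<in> carrier_mat n n. transpose_mat Y = Y} (sym_mat n)"
proof
  fix f
  have "transpose_mat (sym_mat n f) = sym_mat n f"
    by (rule eq_matI) (auto simp: sym_mat_def min.commute max.commute)
  then show "sym_mat n f \<in> {Y \<in> carrier_mat n n. transpose_mat Y = Y}"
    by (simp add: sym_mat_def)
next
  fix m and Y :: "int mat"
  assume "Y \<in> {Y \<in> carrier_mat n n. transpose_mat Y = Y}"
  then have Y: "Y \<in> carrier_mat n n" "transpose_mat Y = Y" by auto
  have "Y $$ (min i j, max i j) = Y $$ (i,j)" if "i < n" "j < n" for i j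
  proof -
    have "Y $$ (j,i) = transpose_mat Y $$ (i,j)" using Y(1) that by simp
    then have "Y $$ (j,i) = Y $$ (i,j)" using Y(2) by simp
    then show ?thesis by (cases "i \<le> j") (simp_all add: min_def max_def)
  qed
  then show "mat_cong m n (sym_mat n (residues m (upper_pairs n) Y)) Y"
    by (simp add: mat_cong_def sym_mat_def residues_def upper_pairs_def cong_def)
next
  fix m f g
  assume "f \<in> PiE (upper_pairs n) (\<lambda>_. {0..<m})" "g \<in> PiE (upper_pairs n) (\<lambda>_. {0..<m})"
    and cong: "mat_cong m n (sym_mat n f) (sym_mat n g)"
  then show "f = g"
  proof (intro PiE_residues_eq_if_cong)
    fix p assume "p \<in> upper_pairs n"
    then obtain i j where p: "p = (i,j)" "i < n" "j < n" "i \<le> j" by (auto simp: upper_pairs_def)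
    then have "[sym_mat n f $$ (i,j) = sym_mat n g $$ (i,j)] (mod m)"
      using cong unfolding mat_cong_def by blast
    then show "[f p = g p] (mod m)" using p by (simp add: sym_mat_def)
  qed
qed auto

lemma card_PiE_residues_dvd_mult:
  assumes "m > 0" "finite I"
  shows "card {f \<in> PiE I (\<lambda>_. {0..<m}). \<forall>p\<in>I. m dvd w p * f p} = (\<Prod>p\<in>I. nat (gcd (w p) m))"
proof -
  have "{f \<in> PiE I (\<lambda>_. {0..<m}). \<forall>p\<in>I. m dvd w p * f p} = PiE I (\<lambda>p. {x \<in> {0..<m}. m dvd w p * x})"
    by (auto simp: PiE_iff extensional_def)
  then show ?thesis using assms by (simp only: card_PiE card_residues_dvd_mult)
qed

lemma card_full_codes_diag:
  assumes "m > 0"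
  shows "card {f \<in> PiE ({0..<n} \<times> {0..<n}) (\<lambda>_. {0..<m}). entries_dvd m n (mat_diag n c * Matrix.mat n n f)}
    = (\<Prod>i<n. nat (gcd (c i) m)) ^ n"
proof -
  have "entries_dvd m n (mat_diag n c * Matrix.mat n n f) \<longleftrightarrow> (\<forall>p \<in> {0..<n} \<times> {0..<n}. m dvd c (fst p) * f p)"
    for f by (auto simp: entries_dvd_def mat_diag_mult_left[of _ n n])
  then have "card {f \<in> PiE ({0..<n} \<times> {0..<n}) (\<lambda>_. {0..<m}). entries_dvd m n (mat_diag n c * Matrix.mat n n f)}
    = (\<Prod>p \<in> {0..<n} \<times> {0..<n}. nat (gcd (c (fst p)) m))"
    using card_PiE_residues_dvd_mult[OF assms, of "{0..<n} \<times> {0..<n}" "\<lambda>p. c (fst p)"] by simp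
  also have "\<dots> = (\<Prod>i\<in>{0..<n}. \<Prod>j\<in>{0..<n}. nat (gcd (c i) m))"
    by (subst prod.cartesian_product) (simp add: split_def)
  also have "\<dots> = (\<Prod>i<n. nat (gcd (c i) m)) ^ n"
    by (simp add: prod_power_distrib atLeast0LessThan)
  finally show ?thesis .
qed

lemma card_sym_codes_diag:
  assumes "m > 0"
  shows "card {f \<in> PiE (upper_pairs n) (\<lambda>_. {0..<m}).
      entries_dvd m n (mat_diag n c * sym_mat n f * mat_diag n c)}
    = (\<Prod>p\<in>upper_pairs n. nat (gcd (c (fst p) * c (snd p)) m))"
proof -
  have entry: "(mat_diag n c * sym_mat n f * mat_diag n c) $$ (i,j) = c i * c j * f (min i j, max i j)"
    if "i < n" "j < n" for f i j
    using that by (simp add: mat_diag_mult_left[of _ n n] mat_diag_mult_right[of _ n n] sym_mat_def)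
  have "entries_dvd m n (mat_diag n c * sym_mat n f * mat_diag n c)
      \<longleftrightarrow> (\<forall>p\<in>upper_pairs n. m dvd c (fst p) * c (snd p) * f p)" (is "?L \<longleftrightarrow> ?R") for f
  proof
    assume ?L
    show ?R
    proof
      fix p assume "p \<in> upper_pairs n"
      then obtain i j where p: "p = (i,j)" "i \<le> j" "j < n" by (auto simp: upper_pairs_def)
      then have "m dvd (mat_diag n c * sym_mat n f * mat_diag n c) $$ (i,j)"
        using \<open>?L\<close> unfolding entries_dvd_def by simp
      then show "m dvd c (fst p) * c (snd p) * f p" using p entry[of i j f] by simp
    qed
  next
    assume ?R
    show ?L unfolding entries_dvd_def
    proof (intro allI impI)
      fix i j assume ij: "i < n" "j < n"
      then have "m dvd c (min i j) * c (max i j) * f (min i j, max i j)"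
        using \<open>?R\<close> by (auto simp: upper_pairs_def)
      moreover have "c (min i j) * c (max i j) = c i * c j"
        by (cases "i \<le> j") (simp_all add: min_def max_def)
      ultimately show "m dvd (mat_diag n c * sym_mat n f * mat_diag n c) $$ (i,j)"
        using entry[OF ij] by simp
    qed
  qed
  then show ?thesis
    using card_PiE_residues_dvd_mult[OF assms finite_upper_pairs, where w = "\<lambda>p. c (fst p) * c (snd p)"]
    by simp
qed

section \<open>Smith forms of scaled orthogonal matrices\<close>

lemma transpose_mat_diag [simp]: "transpose_mat (mat_diag n c) = mat_diag n c"
  by (rule eq_matI) (auto simp: mat_diag_def)

lemma smith_diag_decomp:
  assumes "smith_diag n A d" "A \<in> carrier_mat n n"
  obtains P R where "unimodular n P" "unimodular n R" "A = P * mat_diag n (\<lambda>i. d (Suc i)) * R"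
proof -
  obtain P R where P: "unimodular n P" and R: "unimodular n R"
    and PAR: "P * A * R = Matrix.mat n n (\<lambda>(i,j). if i = j then d (Suc i) else 0)"
    using assms(1) unfolding smith_diag_def by blast
  obtain P' R' where P': "P \<in> carrier_mat n n" "P' \<in> carrier_mat n n" "P * P' = 1\<^sub>m n" "P' * P = 1\<^sub>m n"
    and R': "R \<in> carrier_mat n n" "R' \<in> carrier_mat n n" "R * R' = 1\<^sub>m n" "R' * R = 1\<^sub>m n"
    using P R unfolding unimodular_def by blast
  have diag: "mat_diag n (\<lambda>i. d (Suc i)) = P * A * R"
    unfolding PAR by (rule eq_matI) (auto simp: mat_diag_def)
  have "P' * (P * A * R) * R' = A"
    by (rule sandwich_inverse_cancel[OF P'(1,2,4) R'(1,2,3) assms(2)])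
  then have "P' * mat_diag n (\<lambda>i. d (Suc i)) * R' = A"
    unfolding diag .
  moreover have "unimodular n P'" "unimodular n R'"
    using P' R' unfolding unimodular_def by blast+
  ultimately show ?thesis using that by metis
qed

text \<open>The power (\<Prod>i<n. gcd (a i) m)^n counts the residue matrices Y with diag(a) Y = 0 (mod m),
  and this count is invariant under equivalence.\<close>

lemma prod_gcd_eq_if_diag_equiv:
  assumes "unimodular n U" "unimodular n V" "U * mat_diag n a * V = mat_diag n b" "m > 0"
  shows "(\<Prod>i<n. gcd (a i) m) = (\<Prod>i<n. gcd (b i) m)"
proof -
  obtain V' where V: "V \<in> carrier_mat n n" "V' \<in> carrier_mat n n" "V * V' = 1\<^sub>m n" "V' * V = 1\<^sub>m n"
    using assms(2) unfolding unimodular_def by blast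
  have U: "U \<in> carrier_mat n n" using assms(1) unfolding unimodular_def by blast
  have equiv: "entries_dvd m n (mat_diag n b * Matrix.mat n n f)
      \<longleftrightarrow> entries_dvd m n (mat_diag n a * (V * Matrix.mat n n f * 1\<^sub>m n))" for f
  proof -
    have "mat_diag n b * Matrix.mat n n f = U * (mat_diag n a * (V * Matrix.mat n n f * 1\<^sub>m n)) * 1\<^sub>m n"
      \<comment> \<open>The carrier facts are kept as premises (not as simp rules) so that the side
        conditions of associativity, which have unknown inner dimensions, can be solved.\<close>
      unfolding assms(3)[symmetric] using U V(1) mat_diag_dim[of n a] mat_carrier[of n n f]
      by (simp add: assoc_mult_mat[of _ n n _ n _ n] del: mat_diag_dim mat_carrier)
    moreover have "mat_diag n a * (V * Matrix.mat n n f) \<in> carrier_mat n n"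
      using mult_carrier_mat[OF mat_diag_dim mult_carrier_mat[OF V(1) mat_carrier]] .
    ultimately show ?thesis
      using entries_dvd_unimodular_iff[OF assms(1) unimodular_one] V(1) by simp
  qed
  have "(\<Prod>i<n. nat (gcd (b i) m)) ^ n
      = card {f \<in> PiE ({0..<n} \<times> {0..<n}) (\<lambda>_. {0..<m}). entries_dvd m n (mat_diag n b * Matrix.mat n n f)}"
    by (rule card_full_codes_diag[OF assms(4), symmetric])
  also have "\<dots> = card {f \<in> PiE ({0..<n} \<times> {0..<n}) (\<lambda>_. {0..<m}).
        entries_dvd m n (mat_diag n a * (V * Matrix.mat n n f * 1\<^sub>m n))}"
    unfolding equiv ..
  also have "\<dots> = card {f \<in> PiE ({0..<n} \<times> {0..<n}) (\<lambda>_. {0..<m}).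
        entries_dvd m n (mat_diag n a * Matrix.mat n n f)}"
  proof (rule residue_code.card_sandwich_invariant[OF residue_code_full assms(4) V,
        where T = "1\<^sub>m n" and T' = "1\<^sub>m n"])
    fix Y Y' :: "int mat"
    assume "Y \<in> carrier_mat n n" "Y' \<in> carrier_mat n n" "mat_cong m n Y Y'"
    then have "mat_cong m n (mat_diag n a * Y) (mat_diag n a * Y')"
      by (intro mat_cong_mult) auto
    then show "entries_dvd m n (mat_diag n a * Y) = entries_dvd m n (mat_diag n a * Y')"
      by (rule mat_cong_entries_dvd)
  qed (use V in auto)
  also have "\<dots> = (\<Prod>i<n. nat (gcd (a i) m)) ^ n"
    by (rule card_full_codes_diag[OF assms(4)])
  finally have "(\<Prod>i<n. nat (gcd (b i) m)) ^ n = (\<Prod>i<n. nat (gcd (a i) m)) ^ n" .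
  then have "(\<Prod>i<n. nat (gcd (a i) m)) = (\<Prod>i<n. nat (gcd (b i) m))"
    by (cases "n = 0") (simp_all add: power_eq_iff_eq_base)
  then have "int (\<Prod>i<n. nat (gcd (a i) m)) = int (\<Prod>i<n. nat (gcd (b i) m))" by simp
  then show ?thesis by simp
qed

lemma mult_mat_diag_eq_smult_oneD:
  fixes E :: "int mat"
  assumes E: "E \<in> carrier_mat n n" and ED: "E * mat_diag n c = L \<cdot>\<^sub>m 1\<^sub>m n" and "L \<noteq> 0"
  shows "\<forall>i<n. c i \<noteq> 0 \<and> c i dvd L" and "E = mat_diag n (\<lambda>i. L div c i)"
proof -
  have entry: "E $$ (i,j) * c j = (if i = j then L else 0)" if "i < n" "j < n" for i j
  proof -
    have "E $$ (i,j) * c j = (E * mat_diag n c) $$ (i,j)"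
      using E that by (simp add: mat_diag_mult_right[of _ n n])
    then show ?thesis using ED that by simp
  qed
  show c: "\<forall>i<n. c i \<noteq> 0 \<and> c i dvd L"
  proof (intro allI impI conjI)
    fix i assume "i < n"
    then have "E $$ (i,i) * c i = L" using entry by simp
    then show "c i \<noteq> 0" "c i dvd L" using \<open>L \<noteq> 0\<close> by (auto intro: dvdI)
  qed
  show "E = mat_diag n (\<lambda>i. L div c i)"
  proof (rule eq_matI)
    fix i j assume "i < dim_row (mat_diag n (\<lambda>i. L div c i))" "j < dim_col (mat_diag n (\<lambda>i. L div c i))"
    then have ij: "i < n" "j < n" by (auto simp: mat_diag_def)
    then show "E $$ (i,j) = mat_diag n (\<lambda>i. L div c i) $$ (i,j)"
      using entry[OF ij] c by (auto simp: mat_diag_def)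
  qed (use E in \<open>auto simp: mat_diag_def\<close>)
qed

text \<open>With A = P D R, the matrix E = R A^T P satisfies E D = L, so it is diagonal with entries
  L/d; on the other hand E = (R R^T) D (P^T P).\<close>

lemma smith_diag_equiv_scaled_inverse:
  assumes A: "A \<in> carrier_mat n n" and AA: "transpose_mat A * A = L \<cdot>\<^sub>m 1\<^sub>m n" and "L \<noteq> 0"
    and "smith_diag n A d"
  shows "\<forall>i<n. d (Suc i) \<noteq> 0 \<and> d (Suc i) dvd L"
    and "\<exists>U V. unimodular n U \<and> unimodular n V \<and>
      U * mat_diag n (\<lambda>i. d (Suc i)) * V = mat_diag n (\<lambda>i. L div d (Suc i))"
proof -
  define D where "D = mat_diag n (\<lambda>i. d (Suc i))"
  obtain P R where P: "unimodular n P" and R: "unimodular n R" and PDR: "A = P * D * R"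
    using smith_diag_decomp[OF assms(4) A] unfolding D_def by blast
  obtain R' where R': "R \<in> carrier_mat n n" "R' \<in> carrier_mat n n" "R * R' = 1\<^sub>m n"
    using R unfolding unimodular_def by blast
  have Pc: "P \<in> carrier_mat n n" using P unfolding unimodular_def by blast
  have Dc: "D \<in> carrier_mat n n" by (simp add: D_def)
  define E where "E = R * transpose_mat A * P"
  have Ec: "E \<in> carrier_mat n n" using A Pc R' by (simp add: E_def)
  have "E * D = E * D * (R * R')" using Ec Dc R'(3) by simp
  also have "\<dots> = R * (transpose_mat A * (P * D * R)) * R'"
    unfolding E_def using A Pc Dc R'(1,2) by (simp add: assoc_mult_mat[of _ n n _ n _ n])
  also have "\<dots> = L \<cdot>\<^sub>m (R * R')"
    unfolding PDR[symmetric] AA using R'(1,2)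
    by (simp add: mult_smult_distrib[of R n n "1\<^sub>m n" n L] mult_smult_assoc_mat[of R n n R' n L])
  finally have ED: "E * D = L \<cdot>\<^sub>m 1\<^sub>m n" using R'(3) by simp
  show "\<forall>i<n. d (Suc i) \<noteq> 0 \<and> d (Suc i) dvd L"
    using mult_mat_diag_eq_smult_oneD(1)[OF Ec ED[unfolded D_def] \<open>L \<noteq> 0\<close>] .
  have Ediag: "E = mat_diag n (\<lambda>i. L div d (Suc i))"
    using mult_mat_diag_eq_smult_oneD(2)[OF Ec ED[unfolded D_def] \<open>L \<noteq> 0\<close>] .
  have "transpose_mat D = D" by (simp add: D_def)
  then have "transpose_mat A = transpose_mat R * D * transpose_mat P"
    unfolding PDR using Pc Dc R'(1) by (simp add: transpose_mult[of _ n n _ n] assoc_mult_mat[of _ n n _ n _ n])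
  then have "E = (R * transpose_mat R) * D * (transpose_mat P * P)"
    unfolding E_def using Pc Dc R'(1) by (simp add: assoc_mult_mat[of _ n n _ n _ n])
  moreover have "unimodular n (R * transpose_mat R)" "unimodular n (transpose_mat P * P)"
    using P R by (simp_all add: unimodular_mult unimodular_transpose)
  ultimately show "\<exists>U V. unimodular n U \<and> unimodular n V \<and>
      U * mat_diag n (\<lambda>i. d (Suc i)) * V = mat_diag n (\<lambda>i. L div d (Suc i))"
    using Ediag unfolding D_def by metis
qed

lemma complement_divisor_chain:
  assumes d: "\<forall>i\<in>{1..n}. d i > 0 \<and> d i dvd L" and chain: "divisor_chain n d" and "L > 0"
  shows "\<forall>i\<in>{1..n}. L div d (Suc n - i) > 0" and "divisor_chain n (\<lambda>i. L div d (Suc n - i))"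
proof -
  show "\<forall>i\<in>{1..n}. L div d (Suc n - i) > 0"
  proof
    fix i assume "i \<in> {1..n}"
    then have "Suc n - i \<in> {1..n}" by auto
    then have "d (Suc n - i) > 0" "d (Suc n - i) dvd L" using d by blast+
    then show "L div d (Suc n - i) > 0" using \<open>L > 0\<close> by (auto elim!: dvdE simp: zero_less_mult_iff)
  qed
  show "divisor_chain n (\<lambda>i. L div d (Suc n - i))"
    unfolding divisor_chain_def
  proof (intro allI impI)
    fix i assume i: "1 \<le> i \<and> i < n"
    then have "1 \<le> n - i \<and> n - i < n" by auto
    then have "d (n - i) dvd d (Suc (n - i))" using chain unfolding divisor_chain_def by blast
    then obtain k where k: "d (Suc n - i) = d (n - i) * k" using i by (auto simp: Suc_diff_le elim: dvdE)
    have j: "Suc n - i \<in> {1..n}" "n - i \<in> {1..n}" using i by auto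
    have "d (Suc n - i) dvd L" using d j(1) by blast
    then obtain q where q: "L = d (Suc n - i) * q" by (elim dvdE)
    have "d (n - i) > 0" "d (Suc n - i) > 0" using d j by auto
    have b1: "L div d (Suc n - i) = q" using q \<open>d (Suc n - i) > 0\<close> by simp
    have "L = d (n - i) * (k * q)" using q k by (simp add: mult.assoc)
    then have b2: "L div d (Suc n - Suc i) = k * q" using \<open>d (n - i) > 0\<close> by simp
    show "L div d (Suc n - i) dvd L div d (Suc n - Suc i)" unfolding b1 b2 by simp
  qed
qed

lemma smith_diag_scaled_orthogonal:
  assumes A: "A \<in> carrier_mat n n" and "L > 0" and AA: "transpose_mat A * A = L \<cdot>\<^sub>m 1\<^sub>m n"
    and snf: "smith_diag n A d"
  shows "\<forall>i\<in>{1..n}. d i > 0 \<and> d i * d (Suc n - i) = L"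
proof -
  have nonneg: "\<forall>i\<in>{1..n}. d i \<ge> 0" and chain: "divisor_chain n d"
    using snf unfolding smith_diag_def divisor_chain_def by blast+
  obtain U V where UV: "unimodular n U" "unimodular n V"
    "U * mat_diag n (\<lambda>i. d (Suc i)) * V = mat_diag n (\<lambda>i. L div d (Suc i))"
    using smith_diag_equiv_scaled_inverse(2)[OF A AA _ snf] \<open>L > 0\<close> by auto
  have d: "\<forall>i\<in>{1..n}. d i > 0 \<and> d i dvd L"
  proof
    fix i assume i: "i \<in> {1..n}"
    then have "i - 1 < n" "Suc (i - 1) = i" by auto
    then have "d (Suc (i - 1)) \<noteq> 0 \<and> d (Suc (i - 1)) dvd L"
      using smith_diag_equiv_scaled_inverse(1)[OF A AA _ snf] \<open>L > 0\<close> by blast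
    then have "d i \<noteq> 0" "d i dvd L" unfolding \<open>Suc (i - 1) = i\<close> by simp_all
    moreover have "d i \<ge> 0" using nonneg i by blast
    ultimately show "d i > 0 \<and> d i dvd L" by simp
  qed
  define b where "b i = L div d (Suc n - i)" for i
  have b: "\<forall>i\<in>{1..n}. b i > 0" "divisor_chain n b"
    unfolding b_def using complement_divisor_chain[OF d chain \<open>L > 0\<close>] by auto
  have "(\<Prod>i\<in>{1..n}. gcd (d i) m) = (\<Prod>i\<in>{1..n}. gcd (b i) m)" if "m > 0" for m
  proof -
    have "(\<Prod>i\<in>{1..n}. gcd (d i) m) = (\<Prod>i<n. gcd (d (Suc i)) m)"
      by (rule prod.reindex_bij_witness[where i = Suc and j = "\<lambda>i. i - 1"]) auto
    also have "\<dots> = (\<Prod>i<n. gcd (L div d (Suc i)) m)"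
      by (rule prod_gcd_eq_if_diag_equiv[OF UV that])
    also have "\<dots> = (\<Prod>i\<in>{1..n}. gcd (b i) m)"
      unfolding b_def by (rule prod.reindex_bij_witness[where i = "\<lambda>i. n - i" and j = "\<lambda>i. n - i"]) auto
    finally show ?thesis .
  qed
  then have eq: "d i = b i" if "i \<in> {1..n}" for i
    using divisor_chain_eq_if_prod_gcd_eq[OF _ b(1) chain b(2) _ that] d by auto
  show ?thesis
  proof
    fix i assume i: "i \<in> {1..n}"
    then have "Suc n - i \<in> {1..n}" by auto
    then have "d (Suc n - i) dvd L" using d by blast
    moreover have "d i = L div d (Suc n - i)" using eq[OF i] by (simp add: b_def)
    moreover have "d i > 0" using d i by blast
    ultimately show "d i > 0 \<and> d i * d (Suc n - i) = L" using d i by simp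
  qed
qed

definition sandwich_null_codes :: "int \<Rightarrow> nat \<Rightarrow> int mat \<Rightarrow> (nat \<times> nat \<Rightarrow> int) set" where
  "sandwich_null_codes m n A = {f \<in> PiE (upper_pairs n) (\<lambda>_. {0..<m}).
     entries_dvd m n (transpose_mat A * sym_mat n f * A)}"

lemma card_sandwich_null_codes:
  assumes A: "A \<in> carrier_mat n n" and snf: "smith_diag n A d" and "m > 0"
  shows "card (sandwich_null_codes m n A)
    = (\<Prod>p\<in>upper_pairs n. nat (gcd (d (Suc (fst p)) * d (Suc (snd p))) m))"
proof -
  define D where "D = mat_diag n (\<lambda>i. d (Suc i))"
  have D: "D \<in> carrier_mat n n" "transpose_mat D = D" by (simp_all add: D_def)
  obtain P R where P: "unimodular n P" and R: "unimodular n R" and PDR: "A = P * D * R"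
    using smith_diag_decomp[OF snf A] unfolding D_def by blast
  obtain P' where P': "P \<in> carrier_mat n n" "P' \<in> carrier_mat n n" "P * P' = 1\<^sub>m n" "P' * P = 1\<^sub>m n"
    using P unfolding unimodular_def by blast
  have R': "R \<in> carrier_mat n n" using R unfolding unimodular_def by blast
  have Pt: "transpose_mat P * transpose_mat P' = 1\<^sub>m n" "transpose_mat P' * transpose_mat P = 1\<^sub>m n"
    using P' by (simp_all flip: transpose_mult[of _ n n _ n])
  have reduce: "entries_dvd m n (transpose_mat A * Y * A) \<longleftrightarrow>
      entries_dvd m n (D * (transpose_mat P * Y * P) * D)" if Y: "Y \<in> carrier_mat n n" for Y
  proof -
    have "transpose_mat A * Y * A = transpose_mat R * (D * (transpose_mat P * Y * P) * D) * R"
      unfolding PDR using P'(1) R' D Y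
      by (simp add: transpose_mult[of _ n n _ n] assoc_mult_mat[of _ n n _ n _ n])
    moreover have "transpose_mat P \<in> carrier_mat n n" using P'(1) by simp
    then have "D * (transpose_mat P * Y * P) * D \<in> carrier_mat n n"
      using mult_carrier_mat[OF mult_carrier_mat[OF D(1) mult_carrier_mat[OF mult_carrier_mat[OF _ Y] P'(1)]] D(1)]
      by blast
    ultimately show ?thesis
      using entries_dvd_unimodular_iff[OF unimodular_transpose[OF R] R] by simp
  qed
  have "card (sandwich_null_codes m n A)
      = card {f \<in> PiE (upper_pairs n) (\<lambda>_. {0..<m}).
          entries_dvd m n (D * (transpose_mat P * sym_mat n f * P) * D)}"
    unfolding sandwich_null_codes_def using reduce by (simp add: sym_mat_def)
  also have "\<dots> = card {f \<in> PiE (upper_pairs n) (\<lambda>_. {0..<m}). entries_dvd m n (D * sym_mat n f * D)}"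
  proof (rule residue_code.card_sandwich_invariant[OF residue_code_sym \<open>m > 0\<close>,
        where S = "transpose_mat P" and S' = "transpose_mat P'" and T = P and T' = P'])
    fix Y Y' :: "int mat"
    assume "Y \<in> carrier_mat n n" "Y' \<in> carrier_mat n n" "mat_cong m n Y Y'"
    then have "mat_cong m n (D * Y * D) (D * Y' * D)"
      using D by (intro mat_cong_mult3) auto
    then show "entries_dvd m n (D * Y * D) = entries_dvd m n (D * Y' * D)"
      by (rule mat_cong_entries_dvd)
  qed (use P' Pt in \<open>auto simp: transpose_mult[of _ n n _ n] assoc_mult_mat[of _ n n _ n _ n]\<close>)
  also have "\<dots> = (\<Prod>p\<in>upper_pairs n. nat (gcd (d (Suc (fst p)) * d (Suc (snd p))) m))"
    unfolding D_def by (rule card_sym_codes_diag[OF \<open>m > 0\<close>])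
  finally show ?thesis .
qed

section \<open>From rational to integer matrices\<close>

lemma level_ge_1:
  assumes Q: "Q \<in> carrier_mat n n"
  shows "level n Q \<ge> 1"
proof -
  define den where "den q = nat (snd (quotient_of q))" for q :: rat
  have den: "den q > 0" "of_nat (den q) * q \<in> \<int>" for q
  proof -
    obtain a b where ab: "quotient_of q = (a, b)" by (cases "quotient_of q")
    have b: "b > 0" using quotient_of_denom_pos[OF ab] .
    have den_q: "den q = nat b" using ab by (simp add: den_def)
    then show "den q > 0" using b by simp
    have "of_nat (den q) * q = of_int a" using b den_q quotient_of_div[OF ab] by simp
    then show "of_nat (den q) * q \<in> \<int>" by simp
  qed
  define l where "l = (\<Prod>p\<in>{0..<n} \<times> {0..<n}. den (Q $$ p))"
  have "integral_mat n (of_nat l \<cdot>\<^sub>m Q)"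
    unfolding integral_mat_def
  proof (intro allI impI)
    fix i j assume ij: "i < n" "j < n"
    then have "l = den (Q $$ (i,j)) * (\<Prod>p\<in>{0..<n} \<times> {0..<n} - {(i,j)}. den (Q $$ p))"
      unfolding l_def by (intro prod.remove) auto
    then have "of_nat l * Q $$ (i,j)
        = of_nat (\<Prod>p\<in>{0..<n} \<times> {0..<n} - {(i,j)}. den (Q $$ p)) * (of_nat (den (Q $$ (i,j))) * Q $$ (i,j))"
      by simp
    also have "\<dots> \<in> \<int>" by (rule Ints_mult[OF Ints_of_nat den(2)])
    finally show "(of_nat l \<cdot>\<^sub>m Q) $$ (i,j) \<in> \<int>" using ij Q by simp
  qed
  moreover have "l \<ge> 1" unfolding l_def using den(1) by (simp add: Suc_le_eq prod_pos)
  ultimately have "1 \<le> l \<and> integral_mat n (of_nat l \<cdot>\<^sub>m Q)" by simp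
  from LeastI[of "\<lambda>l. 1 \<le> l \<and> integral_mat n (of_nat l \<cdot>\<^sub>m Q)", OF this]
  show ?thesis unfolding level_def by blast
qed

lemma of_int_sandwich:
  fixes A Y :: "int mat" and Q :: "rat mat"
  assumes A: "A \<in> carrier_mat n n" and Q: "Q \<in> carrier_mat n n" and Y: "Y \<in> carrier_mat n n"
    and AQ: "map_mat of_int A = of_nat l \<cdot>\<^sub>m Q"
  shows "map_mat of_int (transpose_mat A * Y * A) = (of_nat l)^2 \<cdot>\<^sub>m (transpose_mat Q * map_mat of_int Y * Q)"
proof -
  have "map_mat (of_int :: int \<Rightarrow> rat) (transpose_mat A * Y * A)
      = map_mat of_int (transpose_mat A) * map_mat of_int Y * map_mat of_int A"
    using A Y by (simp add: of_int_hom.mat_hom_mult[of _ n n _ n])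
  also have "map_mat (of_int :: int \<Rightarrow> rat) (transpose_mat A) = of_nat l \<cdot>\<^sub>m transpose_mat Q"
    unfolding map_mat_transpose[symmetric] AQ by (rule eq_matI) auto
  also have "of_nat l \<cdot>\<^sub>m transpose_mat Q * map_mat of_int Y * map_mat of_int A
      = of_nat l \<cdot>\<^sub>m (of_nat l \<cdot>\<^sub>m (transpose_mat Q * map_mat of_int Y * Q))"
    unfolding AQ using Q Y by (simp add: mult_smult_assoc_mat[of _ n n] mult_smult_distrib[of _ n n])
  also have "\<dots> = (of_nat l)^2 \<cdot>\<^sub>m (transpose_mat Q * map_mat of_int Y * Q)"
    by (rule eq_matI) (simp_all add: power2_eq_square)
  finally show ?thesis .
qed

lemma of_int_eq_mult_Ints_iff_dvd:
  fixes z L :: int and w :: rat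
  assumes "L \<noteq> 0" and "of_int z = of_int L * w"
  shows "w \<in> \<int> \<longleftrightarrow> L dvd z"
proof
  assume "w \<in> \<int>"
  then obtain k where "w = of_int k" by (elim Ints_cases)
  then have "z = L * k" using assms(2) by (simp flip: of_int_mult)
  then show "L dvd z" by simp
next
  assume "L dvd z"
  then obtain k where "z = L * k" by (elim dvdE)
  then have "w = of_int k" using assms by simp
  then show "w \<in> \<int>" by simp
qed

lemma integral_mat_sandwich_iff:
  fixes A Y :: "int mat" and Q :: "rat mat"
  assumes A: "A \<in> carrier_mat n n" and Q: "Q \<in> carrier_mat n n" and Y: "Y \<in> carrier_mat n n"
    and AQ: "map_mat of_int A = of_nat l \<cdot>\<^sub>m Q" and "l > 0"
  shows "integral_mat n (transpose_mat Q * map_mat of_int Y * Q) \<longleftrightarrow>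
    entries_dvd (int l ^ 2) n (transpose_mat A * Y * A)"
proof -
  have "(transpose_mat Q * map_mat of_int Y * Q) $$ (i,j) \<in> \<int> \<longleftrightarrow>
      int l ^ 2 dvd (transpose_mat A * Y * A) $$ (i,j)" if ij: "i < n" "j < n" for i j
  proof (rule of_int_eq_mult_Ints_iff_dvd)
    have "(of_int ((transpose_mat A * Y * A) $$ (i,j)) :: rat)
        = map_mat of_int (transpose_mat A * Y * A) $$ (i,j)" using A Y ij by simp
    also have "\<dots> = of_int (int l ^ 2) * (transpose_mat Q * map_mat of_int Y * Q) $$ (i,j)"
      unfolding of_int_sandwich[OF A Q Y AQ] using Q Y ij by simp
    finally show "(of_int ((transpose_mat A * Y * A) $$ (i,j)) :: rat)
        = of_int (int l ^ 2) * (transpose_mat Q * map_mat of_int Y * Q) $$ (i,j)" .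
  qed (use \<open>l > 0\<close> in simp)
  then show ?thesis unfolding integral_mat_def entries_dvd_def by auto
qed

lemma scaled_orthogonal_int_mat:
  assumes "orthogonal_rat_mat n Q" and A: "A \<in> carrier_mat n n" and AQ: "map_mat of_int A = of_nat l \<cdot>\<^sub>m Q"
  shows "transpose_mat A * A = (int l)^2 \<cdot>\<^sub>m 1\<^sub>m n"
proof -
  have Q: "Q \<in> carrier_mat n n" "transpose_mat Q * Q = 1\<^sub>m n"
    using assms(1) unfolding orthogonal_rat_mat_def by auto
  have "map_mat (of_int :: int \<Rightarrow> rat) (transpose_mat A * A)
      = map_mat of_int (transpose_mat A * 1\<^sub>m n * A)" using A by simp
  also have "\<dots> = (of_nat l)^2 \<cdot>\<^sub>m 1\<^sub>m n"
    using of_int_sandwich[OF A Q(1) one_carrier_mat AQ] Q by (simp add: of_int_hom.mat_hom_one)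
  also have "\<dots> = map_mat of_int ((int l)^2 \<cdot>\<^sub>m 1\<^sub>m n)" by (rule eq_matI) auto
  finally show ?thesis by (rule of_int_hom.mat_hom_inj)
qed

lemma integral_mat_sandwich_iff_null_codes:
  fixes A Y :: "int mat" and Q :: "rat mat"
  assumes A: "A \<in> carrier_mat n n" and Q: "Q \<in> carrier_mat n n"
    and AQ: "map_mat of_int A = of_nat l \<cdot>\<^sub>m Q" and "l > 0"
    and Y: "Y \<in> carrier_mat n n" "transpose_mat Y = Y"
  shows "integral_mat n (transpose_mat Q * map_mat of_int Y * Q) \<longleftrightarrow>
    residues (int l ^ 2) (upper_pairs n) Y \<in> sandwich_null_codes (int l ^ 2) n A"
proof -
  let ?L = "int l ^ 2"
  have "mat_cong ?L n (sym_mat n (residues ?L (upper_pairs n) Y)) Y"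
    using Y by (intro residue_code.enc_residues[OF residue_code_sym]) simp
  then have "mat_cong ?L n (transpose_mat A * sym_mat n (residues ?L (upper_pairs n) Y) * A)
      (transpose_mat A * Y * A)"
    using A Y by (intro mat_cong_mult3) (auto simp: sym_mat_def)
  then show ?thesis
    unfolding integral_mat_sandwich_iff[OF A Q Y(1) AQ \<open>l > 0\<close>] sandwich_null_codes_def
    using residues_in_PiE[of ?L] \<open>l > 0\<close> by (simp add: mat_cong_entries_dvd)
qed

section \<open>Independent uniform residues\<close>

lemma (in prob_space) prob_uniform_singleton:
  assumes "Z \<in> measurable M (count_space UNIV)"
    and "distr M (count_space UNIV) Z = uniform_measure (count_space UNIV) {0..<m}"
    and "c \<in> {0..<m :: int}"
  shows "prob (Z -` {c} \<inter> space M) = 1 / m"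
proof -
  have "prob (Z -` {c} \<inter> space M) = measure (distr M (count_space UNIV) Z) {c}"
    by (rule measure_distr[symmetric, OF assms(1)]) simp
  also have "\<dots> = measure (count_space UNIV) ({0..<m} \<inter> {c}) / measure (count_space UNIV) {0..<m}"
    unfolding assms(2) using assms(3)
    by (intro measure_uniform_measure) (auto simp: emeasure_count_space_finite)
  also have "\<dots> = 1 / m" using assms(3) by (auto simp: measure_count_space)
  finally show ?thesis .
qed

lemma (in prob_space) prob_indep_uniform_PiE:
  fixes Z :: "'i \<Rightarrow> 'a \<Rightarrow> int"
  assumes I: "finite I" "I \<noteq> {}" and m: "m > 0"
    and indep: "indep_vars (\<lambda>_. count_space UNIV) Z I"
    and unif: "\<And>p. p \<in> I \<Longrightarrow> distr M (count_space UNIV) (Z p) = uniform_measure (count_space UNIV) {0..<m}"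
    and S: "S \<subseteq> PiE I (\<lambda>_. {0..<m})"
  shows "prob {\<omega> \<in> space M. (\<lambda>p\<in>I. Z p \<omega>) \<in> S} = card S / real_of_int m ^ card I"
proof -
  have meas: "Z p \<in> measurable M (count_space UNIV)" if "p \<in> I" for p
    using indep that unfolding indep_vars_def by blast
  define B where "B f = (\<Inter>p\<in>I. Z p -` {f p} \<inter> space M)" for f
  have B_sets: "B f \<in> events" for f
    unfolding B_def using I meas by (intro sets.finite_INT) (auto intro: measurable_sets)
  have event: "{\<omega> \<in> space M. (\<lambda>p\<in>I. Z p \<omega>) \<in> S} = (\<Union>f\<in>S. B f)"
  proof (intro Set.set_eqI iffI)
    fix \<omega> assume "\<omega> \<in> {\<omega> \<in> space M. (\<lambda>p\<in>I. Z p \<omega>) \<in> S}"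
    then show "\<omega> \<in> (\<Union>f\<in>S. B f)" by (auto simp: B_def intro!: bexI[of _ "\<lambda>p\<in>I. Z p \<omega>"])
  next
    fix \<omega> assume "\<omega> \<in> (\<Union>f\<in>S. B f)"
    then obtain f where f: "f \<in> S" "\<omega> \<in> B f" by blast
    then have "(\<lambda>p\<in>I. Z p \<omega>) = f" using S I(2) by (intro PiE_ext[of _ I "\<lambda>_. UNIV"]) (auto simp: B_def)
    then show "\<omega> \<in> {\<omega> \<in> space M. (\<lambda>p\<in>I. Z p \<omega>) \<in> S}" using f I by (auto simp: B_def)
  qed
  have "disjoint_family_on B S"
    unfolding disjoint_family_on_def
  proof (intro ballI impI)
    fix f g assume "f \<in> S" "g \<in> S" "f \<noteq> g"
    then obtain p where "p \<in> I" "f p \<noteq> g p" using S PiE_ext[of f I _ g] by blast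
    then show "B f \<inter> B g = {}" by (auto simp: B_def)
  qed
  moreover have "finite S" using S by (rule finite_subset) (simp add: I(1) finite_PiE)
  ultimately have "prob (\<Union>f\<in>S. B f) = (\<Sum>f\<in>S. prob (B f))"
    using B_sets by (intro finite_measure_finite_Union) auto
  also have "\<dots> = (\<Sum>f\<in>S. (1 / m) ^ card I)"
  proof (rule sum.cong)
    fix f assume "f \<in> S"
    then have f: "f \<in> PiE I (\<lambda>_. {0..<m})" using S by blast
    have "prob (B f) = (\<Prod>p\<in>I. prob (Z p -` {f p} \<inter> space M))"
      unfolding B_def using I by (intro indep_varsD[OF indep]) auto
    also have "\<dots> = (\<Prod>p\<in>I. 1 / m)"
      using f meas unif by (intro prod.cong refl prob_uniform_singleton) auto
    finally show "prob (B f) = (1 / m) ^ card I" by simp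
  qed simp
  finally show ?thesis unfolding event by (simp add: power_one_over)
qed

lemma gcd_smith_pair:
  assumes dL: "\<forall>i\<in>{1..n}. d i > 0 \<and> d i * d (Suc n - i) = L" and chain: "divisor_chain n d"
    and ab: "1 \<le> a" "a \<le> b" "b \<le> n"
  shows "gcd (d a * d b) L = (if a + b \<le> n then d a * d b else L)"
proof -
  have "Suc n - a \<in> {1..n}" "a \<in> {1..n}" "b \<in> {1..n}" using ab by auto
  then have pos: "d a > 0" "d b > 0" "d (Suc n - a) > 0" and L: "d a * d (Suc n - a) = L"
    using dL by auto
  show ?thesis
  proof (cases "a + b \<le> n")
    case True
    then have "d b dvd d (Suc n - a)" using ab by (intro divisor_chain_dvd[OF chain]) auto
    then have "d a * d b dvd L" unfolding L[symmetric] by simp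
    then show ?thesis using True pos by (simp add: gcd_proj1_iff)
  next
    case False
    then have "d (Suc n - a) dvd d b" using ab by (intro divisor_chain_dvd[OF chain]) auto
    then have "L dvd d a * d b" unfolding L[symmetric] by simp
    moreover have "L > 0" unfolding L[symmetric] using pos by simp
    ultimately show ?thesis using False by (simp add: gcd_proj2_iff)
  qed
qed

lemma prod_gcd_smith_pairs_div_power:
  assumes dL: "\<forall>i\<in>{1..n}. d i > 0 \<and> d i * d (Suc n - i) = L" and chain: "divisor_chain n d"
  shows "real (\<Prod>p\<in>upper_pairs n. nat (gcd (d (Suc (fst p)) * d (Suc (snd p))) L)) / real_of_int L ^ card (upper_pairs n)
    = (\<Prod>i\<in>{1..n div 2}. \<Prod>j\<in>{i..n-i}. real_of_int (d i * d j) / L)"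
proof -
  have "real (\<Prod>p\<in>upper_pairs n. nat (gcd (d (Suc (fst p)) * d (Suc (snd p))) L)) / real_of_int L ^ card (upper_pairs n)
      = (\<Prod>p\<in>upper_pairs n. real_of_int (gcd (d (Suc (fst p)) * d (Suc (snd p))) L) / L)"
    by (simp add: prod_dividef)
  also have "\<dots> = (\<Prod>p\<in>upper_pairs n. if fst p + snd p + 2 \<le> n
          then real_of_int (d (Suc (fst p)) * d (Suc (snd p))) / L else 1)"
  proof (rule prod.cong[OF refl])
    fix p assume "p \<in> upper_pairs n"
    then obtain i j where ij: "p = (i,j)" "i \<le> j" "j < n" by (auto simp: upper_pairs_def)
    then have "1 \<in> {1..n}" "n \<in> {1..n}" by auto
    then have "d 1 > 0 \<and> d 1 * d (Suc n - 1) = L" "d n > 0" using dL by blast+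
    then have "d 1 > 0" "d n > 0" "d 1 * d n = L" by simp_all
    then have "L > 0" by (metis mult_pos_pos)
    then show "real_of_int (gcd (d (Suc (fst p)) * d (Suc (snd p))) L) / L
        = (if fst p + snd p + 2 \<le> n then real_of_int (d (Suc (fst p)) * d (Suc (snd p))) / L else 1)"
      using gcd_smith_pair[OF dL chain, of "Suc i" "Suc j"] ij by auto
  qed
  also have "\<dots> = (\<Prod>p\<in>{p \<in> upper_pairs n. fst p + snd p + 2 \<le> n}.
      real_of_int (d (Suc (fst p)) * d (Suc (snd p))) / L)"
    by (rule prod.inter_filter[symmetric]) simp
  also have "\<dots> = (\<Prod>q\<in>Sigma {1..n div 2} (\<lambda>i. {i..n-i}). real_of_int (d (fst q) * d (snd q)) / L)"
    by (rule prod.reindex_bij_witness[where i = "\<lambda>q. (fst q - 1, snd q - 1)" and j = "\<lambda>p. (Suc (fst p), Suc (snd p))"])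
      (auto simp: upper_pairs_def)
  also have "\<dots> = (\<Prod>i\<in>{1..n div 2}. \<Prod>j\<in>{i..n-i}. real_of_int (d i * d j) / L)"
    by (subst prod.Sigma) (auto simp: split_def)
  finally show ?thesis .
qed

theorem corollary1p5:
  fixes n :: nat and Q :: "rat mat" and A :: "int mat" and d :: "nat \<Rightarrow> int"
    and M :: "'a measure" and X :: "'a \<Rightarrow> int mat"
  assumes "n \<ge> 1"
    and "orthogonal_rat_mat n Q"
    and "A \<in> carrier_mat n n"
    and "map_mat of_int A = of_nat (level n Q) \<cdot>\<^sub>m Q"
    and "smith_diag n A d"
    and "prob_space M"
    and "\<forall>\<omega>\<in>space M. X \<omega> \<in> carrier_mat n n \<and> transpose_mat (X \<omega>) = X \<omega>"
    and "\<forall>i<n. \<forall>j<n. (\<lambda>\<omega>. X \<omega> $$ (i,j)) \<in> measurable M (count_space UNIV)"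
    and "prob_space.indep_vars M (\<lambda>_. count_space UNIV)
           (\<lambda>(i,j) \<omega>. X \<omega> $$ (i,j) mod (int (level n Q))^2) {(i,j). i \<le> j \<and> j < n}"
    and "\<forall>i j. i \<le> j \<and> j < n \<longrightarrow>
           distr M (count_space UNIV) (\<lambda>\<omega>. X \<omega> $$ (i,j) mod (int (level n Q))^2)
             = uniform_measure (count_space UNIV) {0..<(int (level n Q))^2}"
  shows "measure M {\<omega> \<in> space M.
           integral_mat n (transpose_mat Q * map_mat of_int (X \<omega>) * Q)}
         = (\<Prod>i\<in>{1..n div 2}. \<Prod>j\<in>{i..n-i}. real_of_int (d i * d j) / real (level n Q)^2)"
proof -
  interpret prob_space M by (rule assms(6))
  define l where "l = level n Q"
  define L where "L = int l ^ 2"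
  have Q: "Q \<in> carrier_mat n n" using assms(2) by (simp add: orthogonal_rat_mat_def)
  have "l > 0" unfolding l_def using level_ge_1[OF Q] by simp
  then have "L > 0" by (simp add: L_def)
  have AQ: "map_mat of_int A = of_nat l \<cdot>\<^sub>m Q" using assms(4) by (simp add: l_def)
  have dL: "\<forall>i\<in>{1..n}. d i > 0 \<and> d i * d (Suc n - i) = L"
    using smith_diag_scaled_orthogonal[OF assms(3) \<open>L > 0\<close> _ assms(5)]
      scaled_orthogonal_int_mat[OF assms(2,3) AQ] by (simp add: L_def)
  have chain: "divisor_chain n d" using assms(5) by (simp add: smith_diag_def divisor_chain_def)
  define Z where "Z = (\<lambda>(i,j) \<omega>. X \<omega> $$ (i,j) mod L)"
  have event: "{\<omega> \<in> space M. integral_mat n (transpose_mat Q * map_mat of_int (X \<omega>) * Q)}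
      = {\<omega> \<in> space M. (\<lambda>p\<in>upper_pairs n. Z p \<omega>) \<in> sandwich_null_codes L n A}"
    using assms(7) integral_mat_sandwich_iff_null_codes[OF assms(3) Q AQ \<open>l > 0\<close>]
    by (auto simp: Z_def L_def residues_def split_def)
  have "prob {\<omega> \<in> space M. (\<lambda>p\<in>upper_pairs n. Z p \<omega>) \<in> sandwich_null_codes L n A}
      = card (sandwich_null_codes L n A) / real_of_int L ^ card (upper_pairs n)"
  proof (rule prob_indep_uniform_PiE[OF finite_upper_pairs _ \<open>L > 0\<close>])
    have "(0, 0) \<in> upper_pairs n" using assms(1) by (simp add: upper_pairs_def)
    then show "upper_pairs n \<noteq> {}" by blast
    show "indep_vars (\<lambda>_. count_space UNIV) Z (upper_pairs n)"
      using assms(9) unfolding Z_def L_def l_def upper_pairs_def .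
    show "distr M (count_space UNIV) (Z p) = uniform_measure (count_space UNIV) {0..<L}"
      if "p \<in> upper_pairs n" for p
      using assms(10) that unfolding Z_def L_def l_def upper_pairs_def by auto
  qed (auto simp: sandwich_null_codes_def)
  also have "\<dots> = (\<Prod>i\<in>{1..n div 2}. \<Prod>j\<in>{i..n-i}. real_of_int (d i * d j) / L)"
    unfolding card_sandwich_null_codes[OF assms(3,5) \<open>L > 0\<close>]
    by (rule prod_gcd_smith_pairs_div_power[OF dL chain])
  finally show ?thesis unfolding event L_def l_def by (simp only: of_int_power of_int_of_nat_eq)
qed

end
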